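(* Let $P,Q\in\Gamma_n$ and $0<r\le R$ with $r\le p_i/q_i\le R$ for all $i$. Let $s,t\in\mathbb{R}$ with $2\le s\le4$ and $2\le t\le4$. Then $$\frac{1}{R^{s+1}}\Big(\frac{R+1}{2}\Big)^{s-t}\frac{(4-s)R+s}{tR+4-t}\,\zeta_t(P\|Q)\le\zeta_s(Q\|P)\le\frac{1}{r^{s+1}}\Big(\frac{r+1}{2}\Big)^{s-t}\frac{(4-s)r+s}{tr+4-t}\,\zeta_t(P\|Q).$$
   Context: $\Gamma_n=\{P=(p_1,\dots,p_n): p_i>0,\ \sum_i p_i=1\}$, $n\ge2$. For $P,Q\in\Gamma_n$ and $s\in\mathbb{R}$: $\zeta_s(P\|Q)=(s-1)^{-1}\sum_i(p_i-q_i)\big(\frac{p_i+q_i}{2q_i}\big)^{s-1}$ for $s\ne1$; $\zeta_1(P\|Q)=\sum_i(p_i-q_i)\ln\frac{p_i+q_i}{2q_i}$. $\zeta_s(Q\|P)$ is obtained by interchanging $p_i$ and $q_i$. *)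

theory Defs
  imports Complex_Main
begin

definition Gamma :: "nat \<Rightarrow> (nat \<Rightarrow> real) set" where
  "Gamma n = {p. (\<forall>i<n. p i > 0) \<and> (\<Sum>i<n. p i) = 1}"

definition zeta :: "nat \<Rightarrow> real \<Rightarrow> (nat \<Rightarrow> real) \<Rightarrow> (nat \<Rightarrow> real) \<Rightarrow> real" where
  "zeta n s p q =
     (if s = 1 then (\<Sum>i<n. (p i - q i) * ln ((p i + q i) / (2 * q i)))
      else (1 / (s - 1)) * (\<Sum>i<n. (p i - q i) * ((p i + q i) / (2 * q i)) powr (s - 1)))"

end

theory Submission
  imports Defs "HOL-Analysis.Convex"
begin

text \<open>
  Writing \<open>x\<^sub>i = p\<^sub>i / q\<^sub>i\<close>, both sides are Csiszar \<open>f\<close>-divergences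
  \<open>\<Sum> q\<^sub>i f(x\<^sub>i)\<close>: \<open>\<zeta>\<^sub>t(P\<parallel>Q)\<close> with generator
  \<open>g(x) = (x - 1) ((x + 1)/2)\<^bsup>t-1\<^esup>/(t - 1)\<close>, and \<open>\<zeta>\<^sub>s(Q\<parallel>P)\<close> with the
  dual \<open>f(x) = x g\<^sub>s(1/x)\<close> of the corresponding generator for \<open>s\<close>.
  Both generators vanish at 1, and \<open>f''(x) = \<phi>(x) g''(x)\<close> with \<open>g'' \<ge> 0\<close>,
  where \<open>\<phi>\<close> is the coefficient in the statement, which is antitone in \<open>x\<close>.
  Hence \<open>f - \<phi>(R) g\<close> and \<open>\<phi>(r) g - f\<close> are convex on \<open>[r, R]\<close>, and Jensen's
  inequality with weights \<open>q\<^sub>i\<close> (where \<open>\<Sum> q\<^sub>i x\<^sub>i = 1\<close>) shows that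
  their divergences are nonnegative.
\<close>

definition csiszar_div :: "nat \<Rightarrow> (real \<Rightarrow> real) \<Rightarrow> (nat \<Rightarrow> real) \<Rightarrow> (nat \<Rightarrow> real) \<Rightarrow> real" where
  "csiszar_div n f p q = (\<Sum>i<n. q i * f (p i / q i))"

lemma csiszar_div_cmult: "csiszar_div n (\<lambda>x. c * f x) p q = c * csiszar_div n f p q"
  by (simp add: csiszar_div_def sum_distrib_left algebra_simps)

lemma csiszar_div_diff: "csiszar_div n (\<lambda>x. f x - g x) p q = csiszar_div n f p q - csiszar_div n g p q"
  by (simp add: csiszar_div_def sum_subtractf algebra_simps)

lemma csiszar_div_swap:
  assumes "\<And>i. i < n \<Longrightarrow> p i > 0" "\<And>i. i < n \<Longrightarrow> q i > 0"
  shows "csiszar_div n f q p = csiszar_div n (\<lambda>x. x * f (1 / x)) p q"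
  unfolding csiszar_div_def using assms by (intro sum.cong) (force simp: field_simps)+

lemma csiszar_div_nonneg:
  assumes "p \<in> Gamma n" "q \<in> Gamma n" "\<And>i. i < n \<Longrightarrow> p i / q i \<in> C"
    and "convex_on C f" "f 1 = 0"
  shows "0 \<le> csiszar_div n f p q"
proof -
  have q_pos: "\<And>i. i < n \<Longrightarrow> q i > 0" and q_sum: "(\<Sum>i<n. q i) = 1"
    using assms(2) by (auto simp: Gamma_def)
  have "{..<n} \<noteq> {}"
    using q_sum by auto
  have "(\<Sum>i<n. q i *\<^sub>R (p i / q i)) = (\<Sum>i<n. p i)"
    using q_pos by (intro sum.cong) (force simp: field_simps)+
  also have "\<dots> = 1"
    using assms(1) by (simp add: Gamma_def)
  finally have "f 1 = f (\<Sum>i<n. q i *\<^sub>R (p i / q i))"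
    by simp
  also have "\<dots> \<le> (\<Sum>i<n. q i * f (p i / q i))"
    using \<open>{..<n} \<noteq> {}\<close> assms(3,4) q_sum q_pos
    by (intro convex_on_sum) (auto intro: less_imp_le)
  finally show ?thesis
    using \<open>f 1 = 0\<close> by (simp add: csiszar_div_def)
qed

lemma csiszar_div_mono_second_deriv:
  assumes "p \<in> Gamma n" "q \<in> Gamma n" "\<And>i. i < n \<Longrightarrow> p i / q i \<in> {a..b}"
    and "\<And>x. x \<in> {a..b} \<Longrightarrow> (f has_real_derivative f' x) (at x)"
    and "\<And>x. x \<in> {a..b} \<Longrightarrow> (f' has_real_derivative f'' x) (at x)"
    and "\<And>x. x \<in> {a..b} \<Longrightarrow> (g has_real_derivative g' x) (at x)"
    and "\<And>x. x \<in> {a..b} \<Longrightarrow> (g' has_real_derivative g'' x) (at x)"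
    and "f 1 = g 1" "\<And>x. x \<in> {a..b} \<Longrightarrow> f'' x \<le> g'' x"
  shows "csiszar_div n f p q \<le> csiszar_div n g p q"
proof -
  have "convex_on {a..b} (\<lambda>x. g x - f x)"
    using assms(4-7,9)
    by (intro f''_ge0_imp_convex[where f' = "\<lambda>x. g' x - f' x" and f'' = "\<lambda>x. g'' x - f'' x"])
       (auto intro: derivative_intros)
  then have "0 \<le> csiszar_div n (\<lambda>x. g x - f x) p q"
    using assms(1-3,8) by (intro csiszar_div_nonneg) auto
  then show ?thesis
    by (simp add: csiszar_div_diff)
qed

lemma csiszar_div_bounds_second_deriv:
  assumes "p \<in> Gamma n" "q \<in> Gamma n" "\<And>i. i < n \<Longrightarrow> p i / q i \<in> {a..b}"
    and "\<And>x. x \<in> {a..b} \<Longrightarrow> (f has_real_derivative f' x) (at x)"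
    and "\<And>x. x \<in> {a..b} \<Longrightarrow> (f' has_real_derivative f'' x) (at x)"
    and "\<And>x. x \<in> {a..b} \<Longrightarrow> (g has_real_derivative g' x) (at x)"
    and "\<And>x. x \<in> {a..b} \<Longrightarrow> (g' has_real_derivative g'' x) (at x)"
    and "f 1 = 0" "g 1 = 0"
    and "\<And>x. x \<in> {a..b} \<Longrightarrow> m * g'' x \<le> f'' x \<and> f'' x \<le> M * g'' x"
  shows "m * csiszar_div n g p q \<le> csiszar_div n f p q \<and> csiszar_div n f p q \<le> M * csiszar_div n g p q"
proof
  have "csiszar_div n (\<lambda>x. m * g x) p q \<le> csiszar_div n f p q"
    using assms by (intro csiszar_div_mono_second_deriv[where f' = "\<lambda>x. m * g' x" and f'' = "\<lambda>x. m * g'' x"])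
      (auto intro: DERIV_cmult)
  then show "m * csiszar_div n g p q \<le> csiszar_div n f p q"
    by (simp add: csiszar_div_cmult)
  have "csiszar_div n f p q \<le> csiszar_div n (\<lambda>x. M * g x) p q"
    using assms by (intro csiszar_div_mono_second_deriv[where g' = "\<lambda>x. M * g' x" and g'' = "\<lambda>x. M * g'' x"])
      (auto intro: DERIV_cmult)
  then show "csiszar_div n f p q \<le> M * csiszar_div n g p q"
    by (simp add: csiszar_div_cmult)
qed

lemma has_real_derivative_comp_inverse:
  assumes "x \<noteq> 0" "(f has_real_derivative D) (at (1 / x))"
  shows "((\<lambda>x. f (1 / x)) has_real_derivative - D / x\<^sup>2) (at x)"
proof -
  have "((\<lambda>x. 1 / x) has_real_derivative - 1 / x\<^sup>2) (at x)"
    using assms(1) by (auto intro!: derivative_eq_intros simp: power2_eq_square)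
  from DERIV_chain2[of f D "\<lambda>x. 1 / x", OF assms(2) this] show ?thesis
    by simp
qed

lemma has_real_derivative_dual:
  assumes "x \<noteq> 0" "(f has_real_derivative D) (at (1 / x))"
  shows "((\<lambda>x. x * f (1 / x)) has_real_derivative f (1 / x) - D / x) (at x)"
  using assms
  by (auto intro!: derivative_eq_intros has_real_derivative_comp_inverse simp: field_simps power2_eq_square)

lemma has_real_derivative_dual_deriv:
  assumes "x \<noteq> 0" "(f has_real_derivative f' (1 / x)) (at (1 / x))"
    and "(f' has_real_derivative D) (at (1 / x))"
  shows "((\<lambda>x. f (1 / x) - f' (1 / x) / x) has_real_derivative D / x ^ 3) (at x)"
  using assms
  by (auto intro!: derivative_eq_intros has_real_derivative_comp_inverse
      simp: field_simps power2_eq_square power3_eq_cube)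

definition zeta_gen :: "real \<Rightarrow> real \<Rightarrow> real" where
  "zeta_gen s x = (x - 1) * ((x + 1) / 2) powr (s - 1) / (s - 1)"

definition zeta_gen_deriv :: "real \<Rightarrow> real \<Rightarrow> real" where
  "zeta_gen_deriv s x = ((x + 1) / 2) powr (s - 2) * (s * x + 2 - s) / (2 * (s - 1))"

definition zeta_gen_deriv2 :: "real \<Rightarrow> real \<Rightarrow> real" where
  "zeta_gen_deriv2 s x = ((x + 1) / 2) powr (s - 3) * (s * x + 4 - s) / 4"

lemma powr_eq_powr_pred_mult: "0 < u \<Longrightarrow> u powr a = u powr (a - 1) * (u :: real)"
  by (simp add: powr_diff)

lemma has_real_derivative_zeta_gen:
  assumes "s \<noteq> 1" "x > -1"
  shows "(zeta_gen s has_real_derivative zeta_gen_deriv s x) (at x)"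
proof -
  let ?u = "(x + 1) / 2"
  have deriv: "(zeta_gen s has_real_derivative
      (?u powr (s - 1) + (s - 1) * ?u powr (s - 2) * (x - 1) / 2) / (s - 1)) (at x)"
    unfolding zeta_gen_def by (insert assms, (rule derivative_eq_intros refl | simp)+)
  have pow: "?u powr (s - 1) = ?u powr (s - 2) * ?u"
    using assms powr_eq_powr_pred_mult[of ?u "s - 1"] by simp
  have "(?u powr (s - 1) + (s - 1) * ?u powr (s - 2) * (x - 1) / 2) / (s - 1) = zeta_gen_deriv s x"
    unfolding zeta_gen_deriv_def pow using assms(1) by (simp add: field_simps)
  with deriv show ?thesis
    by (rule DERIV_cong)
qed

lemma has_real_derivative_zeta_gen_deriv:
  assumes "s \<noteq> 1" "x > -1"
  shows "(zeta_gen_deriv s has_real_derivative zeta_gen_deriv2 s x) (at x)"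
proof -
  let ?u = "(x + 1) / 2"
  have deriv: "(zeta_gen_deriv s has_real_derivative
      ((s - 2) * ?u powr (s - 3) * (s * x + 2 - s) / 2 + ?u powr (s - 2) * s) / (2 * (s - 1))) (at x)"
    unfolding zeta_gen_deriv_def by (insert assms, (rule derivative_eq_intros refl | simp)+)
  have pow: "?u powr (s - 2) = ?u powr (s - 3) * ?u"
    using assms powr_eq_powr_pred_mult[of ?u "s - 2"] by simp
  have "((s - 2) * ?u powr (s - 3) * (s * x + 2 - s) / 2 + ?u powr (s - 2) * s) / (2 * (s - 1))
      = zeta_gen_deriv2 s x"
    unfolding zeta_gen_deriv2_def pow using assms(1) by (simp add: field_simps)
  with deriv show ?thesis
    by (rule DERIV_cong)
qed

lemma zeta_eq_csiszar_div:
  assumes "s \<noteq> 1" "\<And>i. i < n \<Longrightarrow> q i > 0"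
  shows "zeta n s p q = csiszar_div n (zeta_gen s) p q"
proof -
  have "(p i - q i) * ((p i + q i) / (2 * q i)) powr (s - 1) / (s - 1)
      = q i * zeta_gen s (p i / q i)" if "i < n" for i
  proof -
    have "q i > 0" using assms(2) that .
    then have base: "(p i / q i + 1) / 2 = (p i + q i) / (2 * q i)"
      by (simp add: field_simps)
    have "q i * zeta_gen s (p i / q i) = q i * (p i / q i - 1) * ((p i + q i) / (2 * q i)) powr (s - 1) / (s - 1)"
      unfolding zeta_gen_def base by simp
    also have "q i * (p i / q i - 1) = p i - q i"
      using \<open>q i > 0\<close> by (simp add: field_simps)
    finally show ?thesis ..
  qed
  then show ?thesis
    using assms(1) by (simp add: zeta_def csiszar_div_def sum_divide_distrib)
qed

lemma zeta_denom_pos: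
  fixes t z :: real
  assumes "0 \<le> t" "t \<le> 4" "0 < z"
  shows "0 < t * z + 4 - t"
proof (cases "t = 0")
  case False
  then have "0 < t * z"
    using assms by simp
  then show ?thesis
    using assms(2) by linarith
qed simp

lemma zeta_gen_deriv2_nonneg:
  assumes "0 \<le> t" "t \<le> 4" "0 < x"
  shows "0 \<le> zeta_gen_deriv2 t x"
  unfolding zeta_gen_deriv2_def using zeta_denom_pos[OF assms] by simp

definition zeta_ratio :: "real \<Rightarrow> real \<Rightarrow> real \<Rightarrow> real" where
  "zeta_ratio s t x = (1 / x powr (s + 1)) * ((x + 1) / 2) powr (s - t) * (((4 - s) * x + s) / (t * x + 4 - t))"

lemma zeta_gen_deriv2_dual:
  assumes "x > 0" "t * x + 4 - t \<noteq> 0"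
  shows "zeta_gen_deriv2 s (1 / x) / x ^ 3 = zeta_ratio s t x * zeta_gen_deriv2 t x"
proof -
  let ?u = "(x + 1) / 2"
  have base: "(1 / x + 1) / 2 = ?u / x"
    using assms(1) by (simp add: field_simps)
  have dual_base: "((1 / x + 1) / 2) powr (s - 3) = ?u powr (s - 3) / x powr (s - 3)"
    unfolding base using assms(1) by (intro powr_divide)
  have "x powr (s + 1) = x powr (s - 3) * x powr 4"
    by (simp add: powr_add[symmetric] add.commute)
  then have x_pow: "x powr (s + 1) = x powr (s - 3) * x ^ 4"
    using assms(1) by simp
  have u_pow: "?u powr (s - 3) = ?u powr (s - t) * ?u powr (t - 3)"
    using assms(1) by (simp add: powr_add[symmetric])
  have key: "A * B / X * (s * (1 / x) + 4 - s) / 4 / x ^ 3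
      = 1 / (X * x ^ 4) * A * (((4 - s) * x + s) / c) * (B * c / 4)"
    if "X \<noteq> 0" "c \<noteq> 0" for A B X c :: real
    using assms(1) that by (simp add: field_simps eval_nat_numeral)
  show ?thesis
    unfolding zeta_gen_deriv2_def zeta_ratio_def dual_base x_pow u_pow
    by (rule key) (use assms in simp_all)
qed

lemma power_factor_antimono:
  fixes s t x y :: real
  assumes "0 < x" "x \<le> y" "s \<ge> -1" "t \<ge> -1"
  shows "1 / y powr (s + 1) * ((y + 1) / 2) powr (s - t) \<le> 1 / x powr (s + 1) * ((x + 1) / 2) powr (s - t)"
proof (cases "t \<le> s")
  case True
  have split: "1 / z powr (s + 1) * ((z + 1) / 2) powr (s - t) = ((z + 1) / (2 * z)) powr (s - t) / z powr (t + 1)"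
    if "z > 0" for z :: real
  proof -
    have "z powr (s + 1) = z powr (s - t) * z powr (t + 1)"
      by (simp add: powr_add[symmetric])
    then show ?thesis
      using that by (simp add: powr_divide powr_mult)
  qed
  have "0 < y"
    using assms by linarith
  have "(y + 1) / (2 * y) \<le> (x + 1) / (2 * x)"
    using assms by (simp add: divide_simps algebra_simps)
  then have "((y + 1) / (2 * y)) powr (s - t) \<le> ((x + 1) / (2 * x)) powr (s - t)"
    using assms True by (intro powr_mono2) auto
  moreover have "x powr (t + 1) \<le> y powr (t + 1)"
    using assms by (intro powr_mono2) auto
  ultimately show ?thesis
    unfolding split[OF assms(1)] split[OF \<open>0 < y\<close>] using assms by (intro frac_le) auto
next
  case False
  have "1 / y powr (s + 1) \<le> 1 / x powr (s + 1)"
    using assms by (intro divide_left_mono powr_mono2) auto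
  moreover have "((y + 1) / 2) powr (s - t) \<le> ((x + 1) / 2) powr (s - t)"
    using assms False by (intro powr_mono2') auto
  ultimately show ?thesis
    using assms by (intro mult_mono) auto
qed

text \<open>A Moebius map is antitone iff its determinant, here \<open>16 - 4 s - 4 t\<close>, is nonpositive.\<close>
lemma moebius_factor_antimono:
  fixes s t x y :: real
  assumes "0 < x" "x \<le> y" "4 \<le> s + t" "0 \<le> t" "t \<le> 4"
  shows "((4 - s) * y + s) / (t * y + 4 - t) \<le> ((4 - s) * x + s) / (t * x + 4 - t)"
proof -
  have "((4 - s) * x + s) * (t * y + 4 - t) - ((4 - s) * y + s) * (t * x + 4 - t) = (y - x) * (4 * s + 4 * t - 16)"
    by (simp add: algebra_simps)
  also have "\<dots> \<ge> 0"
    using assms by simp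
  finally show ?thesis
    using zeta_denom_pos[of t x] zeta_denom_pos[of t y] assms by (simp add: divide_simps)
qed

lemma zeta_ratio_antimono:
  assumes "0 < x" "x \<le> y" "2 \<le> s" "s \<le> 4" "2 \<le> t" "t \<le> 4"
  shows "zeta_ratio s t y \<le> zeta_ratio s t x"
  unfolding zeta_ratio_def
proof (rule mult_mono)
  show "1 / y powr (s + 1) * ((y + 1) / 2) powr (s - t) \<le> 1 / x powr (s + 1) * ((x + 1) / 2) powr (s - t)"
    using assms by (intro power_factor_antimono) auto
  show "((4 - s) * y + s) / (t * y + 4 - t) \<le> ((4 - s) * x + s) / (t * x + 4 - t)"
    using assms by (intro moebius_factor_antimono) auto
  have "0 < t * y + 4 - t"
    using assms by (intro zeta_denom_pos) auto
  then show "0 \<le> ((4 - s) * y + s) / (t * y + 4 - t)"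
    using assms by (intro divide_nonneg_pos) (auto intro: add_nonneg_nonneg)
qed simp

lemma has_real_derivative_zeta_dual:
  assumes "s \<noteq> 1" "x > 0"
  shows "((\<lambda>x. x * zeta_gen s (1 / x)) has_real_derivative zeta_gen s (1 / x) - zeta_gen_deriv s (1 / x) / x) (at x)"
proof -
  have "-1 < 1 / x"
    using assms(2) by (smt (verit) divide_pos_pos)
  then show ?thesis
    using assms by (intro has_real_derivative_dual has_real_derivative_zeta_gen) auto
qed

lemma has_real_derivative_zeta_dual_deriv:
  assumes "s \<noteq> 1" "x > 0" "t * x + 4 - t \<noteq> 0"
  shows "((\<lambda>x. zeta_gen s (1 / x) - zeta_gen_deriv s (1 / x) / x) has_real_derivative
      zeta_ratio s t x * zeta_gen_deriv2 t x) (at x)"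
proof -
  have "-1 < 1 / x"
    using assms(2) by (smt (verit) divide_pos_pos)
  then have "((\<lambda>x. zeta_gen s (1 / x) - zeta_gen_deriv s (1 / x) / x) has_real_derivative
      zeta_gen_deriv2 s (1 / x) / x ^ 3) (at x)"
    using assms
    by (intro has_real_derivative_dual_deriv has_real_derivative_zeta_gen has_real_derivative_zeta_gen_deriv) auto
  then show ?thesis
    by (simp only: zeta_gen_deriv2_dual[OF assms(2,3)])
qed

lemma csiszar_div_zeta_dual_bounds:
  assumes "p \<in> Gamma n" "q \<in> Gamma n" "0 < r" "\<And>i. i < n \<Longrightarrow> p i / q i \<in> {r..R}"
    and "2 \<le> s" "s \<le> 4" "2 \<le> t" "t \<le> 4"
  shows "zeta_ratio s t R * csiszar_div n (zeta_gen t) p q \<le> csiszar_div n (\<lambda>x. x * zeta_gen s (1 / x)) p q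
    \<and> csiszar_div n (\<lambda>x. x * zeta_gen s (1 / x)) p q \<le> zeta_ratio s t r * csiszar_div n (zeta_gen t) p q"
proof (rule csiszar_div_bounds_second_deriv[OF assms(1,2,4)])
  fix x :: real
  assume "x \<in> {r..R}"
  then have "0 < x" "x \<le> R" "r \<le> x"
    using assms(3) by auto
  have "s \<noteq> 1" "t \<noteq> 1"
    using assms by auto
  have "0 < t * x + 4 - t"
    using \<open>0 < x\<close> assms by (intro zeta_denom_pos) auto
  moreover have "0 \<le> zeta_gen_deriv2 t x"
    using \<open>0 < x\<close> assms by (intro zeta_gen_deriv2_nonneg) auto
  ultimately show "((\<lambda>x. x * zeta_gen s (1 / x)) has_real_derivative zeta_gen s (1 / x) - zeta_gen_deriv s (1 / x) / x) (at x)"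
    and "((\<lambda>x. zeta_gen s (1 / x) - zeta_gen_deriv s (1 / x) / x) has_real_derivative
      zeta_ratio s t x * zeta_gen_deriv2 t x) (at x)"
    and "(zeta_gen t has_real_derivative zeta_gen_deriv t x) (at x)"
    and "(zeta_gen_deriv t has_real_derivative zeta_gen_deriv2 t x) (at x)"
    and "zeta_ratio s t R * zeta_gen_deriv2 t x \<le> zeta_ratio s t x * zeta_gen_deriv2 t x
      \<and> zeta_ratio s t x * zeta_gen_deriv2 t x \<le> zeta_ratio s t r * zeta_gen_deriv2 t x"
    using \<open>0 < x\<close> \<open>x \<le> R\<close> \<open>r \<le> x\<close> \<open>s \<noteq> 1\<close> \<open>t \<noteq> 1\<close> assms
    by (auto intro!: has_real_derivative_zeta_dual has_real_derivative_zeta_dual_deriv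
        has_real_derivative_zeta_gen has_real_derivative_zeta_gen_deriv mult_right_mono zeta_ratio_antimono)
qed (simp_all add: zeta_gen_def)

theorem theorem4p1:
  fixes n :: nat and p q :: "nat \<Rightarrow> real" and r R s t :: real
  assumes "n \<ge> 2"
    and "p \<in> Gamma n" and "q \<in> Gamma n"
    and "0 < r" and "r \<le> R"
    and "\<And>i. i < n \<Longrightarrow> r \<le> p i / q i \<and> p i / q i \<le> R"
    and "2 \<le> s" and "s \<le> 4" and "2 \<le> t" and "t \<le> 4"
  shows "(1 / R powr (s + 1)) * ((R + 1) / 2) powr (s - t) * (((4 - s) * R + s) / (t * R + 4 - t))
           * zeta n t p q \<le> zeta n s q p \<and>
         zeta n s q p \<le> (1 / r powr (s + 1)) * ((r + 1) / 2) powr (s - t)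
           * (((4 - s) * r + s) / (t * r + 4 - t)) * zeta n t p q"
proof -
  have p_pos: "\<And>i. i < n \<Longrightarrow> p i > 0" and q_pos: "\<And>i. i < n \<Longrightarrow> q i > 0"
    using assms(2,3) by (auto simp: Gamma_def)
  have "s \<noteq> 1" "t \<noteq> 1"
    using assms by auto
  have zeta_s: "zeta n s q p = csiszar_div n (\<lambda>x. x * zeta_gen s (1 / x)) p q"
    using zeta_eq_csiszar_div[OF \<open>s \<noteq> 1\<close> p_pos] csiszar_div_swap[OF p_pos q_pos] by simp
  have zeta_t: "zeta n t p q = csiszar_div n (zeta_gen t) p q"
    using zeta_eq_csiszar_div[OF \<open>t \<noteq> 1\<close> q_pos] .
  have ratios: "p i / q i \<in> {r..R}" if "i < n" for i
    using assms(6)[OF that] by simp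
  show ?thesis
    unfolding zeta_s zeta_t
    using csiszar_div_zeta_dual_bounds[OF assms(2,3,4) ratios assms(7-10)]
    unfolding zeta_ratio_def .
qed

end
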